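(* Let $D\subset\Phi^+$ be an orthogonal subset with $D\cap\mathcal C_1=\{\varepsilon_1-\varepsilon_j\}$ for some $1<j\le n$. Let $\tilde\Phi^+$ be the set of roots of $\Phi^+$ involving neither $\varepsilon_1$ nor $\varepsilon_j$ (i.e. $\tilde\Phi^+=\Phi^+\setminus(\mathcal C_1\cup\mathcal C_j\cup\mathcal R_j\cup\mathcal R_{-j})$), $\tilde D=D\cap\tilde\Phi^+$, $\tilde\sigma=\prod_{\beta\in\tilde D}r_\beta$, and $l'(\tilde\sigma)=\#\{\alpha\in\tilde\Phi^+:\tilde\sigma(\alpha)\notin\tilde\Phi^+\}$ (the length of $\tilde\sigma$ in the Weyl group of the root system $\tilde\Phi=\tilde\Phi^+\cup-\tilde\Phi^+$, which has the same type as $\Phi$ and rank $n-2$). Then $l(\sigma)=l'(\tilde\sigma)+|S(\varepsilon_1-\varepsilon_j)|+1$.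
   Context: Let $\Phi$ be a root system of type $B_n$, $C_n$ or $D_n$ in $\mathbb R^n$ with standard basis $\varepsilon_1,\dots,\varepsilon_n$ and positive roots $\Phi^+=\{\varepsilon_i\pm\varepsilon_j:1\le i<j\le n\}\cup\Phi_1^+$, where $\Phi_1^+=\emptyset$ for $D_n$, $\{\varepsilon_i\}$ for $B_n$, $\{2\varepsilon_i\}$ for $C_n$. $D\subset\Phi^+$ is orthogonal if its roots are pairwise orthogonal. $r_\beta$ denotes the reflection in the hyperplane orthogonal to $\beta$, $\sigma=\prod_{\beta\in D}r_\beta$, and $l(\sigma)=\#\{\alpha\in\Phi^+:\sigma(\alpha)\in-\Phi^+\}$ (the length of $\sigma$ in the Weyl group). $\mathrm{col}(\varepsilon_i\pm\varepsilon_j)=\mathrm{col}(\varepsilon_i)=\mathrm{col}(2\varepsilon_i)=i$; $\mathrm{row}(\varepsilon_i\pm\varepsilon_j)=\mp j$, $\mathrm{row}(\varepsilon_i)=0$, $\mathrm{row}(2\varepsilon_i)=-i$; $\mathcal R_i=\{\alpha\in\Phi^+:\mathrm{row}(\alpha)=i\}$, $\mathcal C_j=\{\alpha\in\Phi^+:\mathrm{col}(\alpha)=j\}$. For $\beta\in\Phi^+$, $S(\beta)=\{\alpha\in\Phi^+:\beta-\alpha\in\Phi^+\}$. *)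

theory Defs
  imports Complex_Main "HOL-Library.Function_Algebras"
begin

text \<open>Vectors of R^n are modelled as functions nat => real; only the coordinates
  1..n are relevant (all roots vanish outside {1..n}).\<close>

datatype rtype = TypeB | TypeC | TypeD

type_synonym vec = "nat \<Rightarrow> real"

definition eps :: "nat \<Rightarrow> vec" where
  "eps i = (\<lambda>k. if k = i then 1 else 0)"

datatype rlabel = Minus nat nat | Plus nat nat | Short nat | Long nat

fun rvec :: "rlabel \<Rightarrow> vec" where
  "rvec (Minus i j) = eps i - eps j"
| "rvec (Plus i j) = eps i + eps j"
| "rvec (Short i) = eps i"
| "rvec (Long i) = 2 * eps i"

fun rcol :: "rlabel \<Rightarrow> nat" where
  "rcol (Minus i j) = i"
| "rcol (Plus i j) = i"
| "rcol (Short i) = i"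
| "rcol (Long i) = i"

fun rrow :: "rlabel \<Rightarrow> int" where
  "rrow (Minus i j) = int j"
| "rrow (Plus i j) = - int j"
| "rrow (Short i) = 0"
| "rrow (Long i) = - int i"

definition pos_labels :: "rtype \<Rightarrow> nat \<Rightarrow> rlabel set" where
  "pos_labels t n =
     {Minus i j | i j. 1 \<le> i \<and> i < j \<and> j \<le> n}
   \<union> {Plus i j | i j. 1 \<le> i \<and> i < j \<and> j \<le> n}
   \<union> (case t of TypeD \<Rightarrow> {}
        | TypeB \<Rightarrow> {Short i | i. 1 \<le> i \<and> i \<le> n}
        | TypeC \<Rightarrow> {Long i | i. 1 \<le> i \<and> i \<le> n})"

definition pos_roots :: "rtype \<Rightarrow> nat \<Rightarrow> vec set" where
  "pos_roots t n = rvec ` pos_labels t n"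

definition row_set :: "rtype \<Rightarrow> nat \<Rightarrow> int \<Rightarrow> vec set" where
  "row_set t n i = rvec ` {r \<in> pos_labels t n. rrow r = i}"

definition col_set :: "rtype \<Rightarrow> nat \<Rightarrow> nat \<Rightarrow> vec set" where
  "col_set t n j = rvec ` {r \<in> pos_labels t n. rcol r = j}"

definition ip :: "nat \<Rightarrow> vec \<Rightarrow> vec \<Rightarrow> real" where
  "ip n v w = (\<Sum>k\<in>{1..n}. v k * w k)"

definition orthogonal_set :: "nat \<Rightarrow> vec set \<Rightarrow> bool" where
  "orthogonal_set n D \<longleftrightarrow> (\<forall>a\<in>D. \<forall>b\<in>D. a \<noteq> b \<longrightarrow> ip n a b = 0)"

definition refl :: "nat \<Rightarrow> vec \<Rightarrow> vec \<Rightarrow> vec" where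
  "refl n \<beta> v = (\<lambda>k. v k - (2 * ip n v \<beta> / ip n \<beta> \<beta>) * \<beta> k)"

text \<open>Product of the reflections r_beta, beta in D (they commute when D is orthogonal).\<close>
definition refl_prod :: "nat \<Rightarrow> vec set \<Rightarrow> vec \<Rightarrow> vec" where
  "refl_prod n D = Finite_Set.fold (\<lambda>\<beta> f. refl n \<beta> \<circ> f) id D"

definition wlen :: "rtype \<Rightarrow> nat \<Rightarrow> (vec \<Rightarrow> vec) \<Rightarrow> nat" where
  "wlen t n \<sigma> = card {\<alpha> \<in> pos_roots t n. \<sigma> \<alpha> \<in> uminus ` pos_roots t n}"

definition S_set :: "rtype \<Rightarrow> nat \<Rightarrow> vec \<Rightarrow> vec set" where
  "S_set t n \<beta> = {\<alpha> \<in> pos_roots t n. \<beta> - \<alpha> \<in> pos_roots t n}"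

definition tilde_roots :: "rtype \<Rightarrow> nat \<Rightarrow> nat \<Rightarrow> vec set" where
  "tilde_roots t n j = pos_roots t n -
     (col_set t n 1 \<union> col_set t n j \<union> row_set t n (int j) \<union> row_set t n (- int j))"

end

theory Submission
  imports Defs "HOL-Combinatorics.Transposition"
begin

text \<open>
  Every reflection in a positive root of type B, C or D acts on the coordinates
  1..n as a signed permutation, so the product \<sigma> of the reflections in an orthogonal set D is a
  signed permutation; the product of the reflections in the part of D not touching the
  coordinates 1 and j fixes those two coordinates.  Signed permutations map positive roots to
  roots, and a root is negative exactly when its first non-zero coordinate is negative.

  Writing \<beta> = eps 1 - eps j, orthogonality forces D = {\<beta>} \<union> D~ with D~ \<subseteq> Phi~^+, hence
  \<sigma> = r_\<beta> \<circ> \<sigma>~ where \<sigma>~ fixes the coordinates 1 and j.  The inversions of \<sigma> then split into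
  (a) the roots of Phi~^+ sent out of Phi~^+ by \<sigma>~, counted by l'(\<sigma>~), and
  (b) the roots involving eps 1 or eps j, which are exactly the j - 1 roots eps a - eps j
      (a < j) and the j - 2 roots eps 1 - e_k eps_(q k) (1 < k < j), where \<sigma>~ is the signed
      permutation (q, e); so there are 2 j - 3 of them.
  Finally S(\<beta>) consists of the 2 (j - 2) roots eps 1 - eps b and eps b - eps j with 1 < b < j,
  and 2 j - 3 = 2 (j - 2) + 1.
\<close>

section \<open>Positive roots\<close>

lemma eps_apply: "eps i k = (if k = i then 1 else 0)"
  by (simp add: eps_def)

lemma eps_inj: "eps a = eps b \<Longrightarrow> a = b"
  by (metis eps_apply zero_neq_one)

lemma pos_labels_cases:
  assumes "l \<in> pos_labels t n"
  obtains (M) a b where "l = Minus a b" "1 \<le> a" "a < b" "b \<le> n"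
   | (P) a b where "l = Plus a b" "1 \<le> a" "a < b" "b \<le> n"
   | (S) a where "l = Short a" "t = TypeB" "1 \<le> a" "a \<le> n"
   | (L) a where "l = Long a" "t = TypeC" "1 \<le> a" "a \<le> n"
  using assms unfolding pos_labels_def by (cases t) auto

lemma finite_pos_roots: "finite (pos_roots t n)"
proof -
  let ?I = "{1..n} \<times> {1..n}"
  have "pos_labels t n \<subseteq> case_prod Minus ` ?I \<union> case_prod Plus ` ?I \<union> Short ` {1..n} \<union> Long ` {1..n}"
  proof
    fix l assume "l \<in> pos_labels t n"
    then show "l \<in> case_prod Minus ` ?I \<union> case_prod Plus ` ?I \<union> Short ` {1..n} \<union> Long ` {1..n}"
      by (cases rule: pos_labels_cases) force+
  qed
  then have "finite (pos_labels t n)" by (rule finite_subset) auto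
  then show ?thesis unfolding pos_roots_def by simp
qed

lemma Minus_in: "1 \<le> a \<Longrightarrow> a < b \<Longrightarrow> b \<le> n \<Longrightarrow> eps a - eps b \<in> pos_roots t n"
  unfolding pos_roots_def pos_labels_def by (rule image_eqI[of _ _ "Minus a b"]) auto

lemma Plus_in: "1 \<le> a \<Longrightarrow> a < b \<Longrightarrow> b \<le> n \<Longrightarrow> eps a + eps b \<in> pos_roots t n"
  unfolding pos_roots_def pos_labels_def by (rule image_eqI[of _ _ "Plus a b"]) auto

lemma Short_in: "1 \<le> a \<Longrightarrow> a \<le> n \<Longrightarrow> eps a \<in> pos_roots TypeB n"
  unfolding pos_roots_def pos_labels_def by (rule image_eqI[of _ _ "Short a"]) auto

lemma Long_in: "1 \<le> a \<Longrightarrow> a \<le> n \<Longrightarrow> 2 * eps a \<in> pos_roots TypeC n"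
  unfolding pos_roots_def pos_labels_def by (rule image_eqI[of _ _ "Long a"]) auto

lemma label_leading_coord:
  assumes "l \<in> pos_labels t n"
  shows "1 \<le> rcol l" "rcol l \<le> n" "rvec l (rcol l) > 0" "\<forall>k < rcol l. rvec l k = 0"
  using assms by (cases rule: pos_labels_cases; simp add: eps_apply)+

definition all_roots :: "rtype \<Rightarrow> nat \<Rightarrow> vec set" where
  "all_roots t n = pos_roots t n \<union> uminus ` pos_roots t n"

lemma neg_root_leading:
  assumes "v \<in> uminus ` pos_roots t n"
  obtains m where "1 \<le> m" "m \<le> n" "\<forall>k<m. v k = 0" "v m < 0"
proof -
  obtain l where "l \<in> pos_labels t n" "v = - rvec l"
    using assms unfolding pos_roots_def by auto
  then show ?thesis using label_leading_coord that[of "rcol l"] by auto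
qed

lemma pos_root_not_neg:
  assumes "v \<in> pos_roots t n" shows "v \<notin> uminus ` pos_roots t n"
proof
  assume "v \<in> uminus ` pos_roots t n"
  then obtain m where m: "\<forall>k<m. v k = 0" "v m < 0" by (rule neg_root_leading)
  obtain l where l: "l \<in> pos_labels t n" "v = rvec l" using assms unfolding pos_roots_def by auto
  show False
    using label_leading_coord(3,4)[OF l(1)] m l(2) by (cases "rcol l" m rule: linorder_cases) auto
qed

lemma neg_root_if_leading_negative:
  assumes "v \<in> all_roots t n" "1 \<le> m" "\<forall>k. 1 \<le> k \<and> k < m \<longrightarrow> v k = 0" "v m < 0"
  shows "v \<in> uminus ` pos_roots t n"
proof (rule ccontr)
  assume "v \<notin> uminus ` pos_roots t n"
  then obtain l where l: "l \<in> pos_labels t n" "v = rvec l"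
    using assms(1) unfolding all_roots_def pos_roots_def by auto
  show False
    using label_leading_coord(1,3,4)[OF l(1)] assms(2-4) l(2)
    by (cases "rcol l" m rule: linorder_cases) auto
qed

lemma pos_root_first_coord:
  assumes "v \<in> pos_roots t n"
  shows "v 1 \<ge> 0" and "v 1 \<noteq> 0 \<Longrightarrow> v \<in> col_set t n 1"
proof -
  obtain l where l: "l \<in> pos_labels t n" "v = rvec l" using assms unfolding pos_roots_def by auto
  show "v 1 \<ge> 0"
    using l(1) by (cases rule: pos_labels_cases) (use l in \<open>auto simp: eps_apply\<close>)
  assume "v 1 \<noteq> 0"
  with l have "rcol l = 1"
    by (cases rule: pos_labels_cases) (auto simp: eps_apply split: if_splits)
  then show "v \<in> col_set t n 1" using l unfolding col_set_def by auto
qed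

lemma pos_root_neg_coord:
  assumes "v \<in> pos_roots t n" "v j < 0"
  shows "\<exists>a. 1 \<le> a \<and> a < j \<and> v = eps a - eps j"
proof -
  obtain l where l: "l \<in> pos_labels t n" "v = rvec l" using assms unfolding pos_roots_def by auto
  from l(1) show ?thesis
    by (cases rule: pos_labels_cases) (use l assms(2) in \<open>auto simp: eps_apply split: if_splits\<close>)
qed

lemma pos_root_in_col1:
  assumes "v \<in> pos_roots t n" "v 1 \<noteq> 0" "v b \<noteq> 0" "b \<noteq> 1"
  shows "v = (\<lambda>i. eps 1 i + v b * eps b i)" "v b = 1 \<or> v b = -1"
proof -
  obtain l where l: "l \<in> pos_labels t n" "v = rvec l" using assms unfolding pos_roots_def by auto
  from l(1) show "v = (\<lambda>i. eps 1 i + v b * eps b i)" "v b = 1 \<or> v b = -1"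
    by (cases rule: pos_labels_cases; use l assms(2-4) in \<open>auto simp: eps_apply fun_eq_iff split: if_splits\<close>)+
qed

lemma coord_sum_pos_root:
  assumes "v \<in> pos_roots t n"
  shows "(\<Sum>k\<in>{1..n}. v k) \<ge> 0"
    and "(\<Sum>k\<in>{1..n}. v k) = 0 \<Longrightarrow> \<exists>a b. 1 \<le> a \<and> a < b \<and> b \<le> n \<and> v = eps a - eps b"
proof -
  have sum_eps: "sum (eps a) {Suc 0..n} = 1" if "1 \<le> a" "a \<le> n" for a
    using that by (simp add: eps_apply)
  obtain l where l: "l \<in> pos_labels t n" "v = rvec l" using assms unfolding pos_roots_def by auto
  show "(\<Sum>k\<in>{1..n}. v k) \<ge> 0"
    using l(1) by (cases rule: pos_labels_cases)
      (use l in \<open>auto simp: sum_eps sum_subtractf sum.distrib sum_distrib_left[symmetric]\<close>)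
  assume "(\<Sum>k\<in>{1..n}. v k) = 0"
  with l show "\<exists>a b. 1 \<le> a \<and> a < b \<and> b \<le> n \<and> v = eps a - eps b"
    by (cases rule: pos_labels_cases)
      (auto simp: sum_eps sum_subtractf sum.distrib sum_distrib_left[symmetric])
qed

section \<open>Reflections as signed permutations\<close>

lemma ip_eps: "1 \<le> a \<Longrightarrow> a \<le> n \<Longrightarrow> ip n v (eps a) = v a"
  unfolding ip_def eps_apply by (simp add: if_distrib cong: if_cong)

lemma ip_diff: "ip n v (u - w) = ip n v u - ip n v w"
  unfolding ip_def by (simp add: right_diff_distrib sum_subtractf)

lemma ip_add: "ip n v (u + w) = ip n v u + ip n v w"
  unfolding ip_def by (simp add: distrib_left sum.distrib)

lemma ip_two: "ip n v (2 * u) = 2 * ip n v u"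
  unfolding ip_def by (simp add: sum_distrib_left mult.left_commute)

lemma ip_sym: "ip n u v = ip n v u"
  unfolding ip_def by (simp add: mult.commute)

lemma ip_lin1: "ip n (\<lambda>k. v k - c * y k) x = ip n v x - c * ip n y x"
  by (simp add: ip_def left_diff_distrib sum_subtractf sum_distrib_left mult.assoc)

text \<open>Reflections in orthogonal vectors commute; hence the fold defining refl_prod is
  independent of the order on an orthogonal set.\<close>

lemma refl_orthogonal_commute:
  assumes "ip n x y = 0"
  shows "refl n x (refl n y v) = refl n y (refl n x v)"
proof -
  have "ip n (refl n y v) x = ip n v x" "ip n (refl n x v) y = ip n v y"
    using assms ip_sym[of n x y] unfolding refl_def ip_lin1 by simp_all
  then show ?thesis
    by (simp add: refl_def[of n x "refl n y v"] refl_def[of n y "refl n x v"])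
       (simp add: refl_def fun_eq_iff algebra_simps)
qed

lemma refl_prod_insert:
  assumes "orthogonal_set n D" "insert x F \<subseteq> D" "finite F" "x \<notin> F"
  shows "refl_prod n (insert x F) = refl n x \<circ> refl_prod n F"
proof -
  interpret comp_fun_commute_on D "\<lambda>\<beta> f. refl n \<beta> \<circ> f"
  proof
    fix x y assume xy: "x \<in> D" "y \<in> D"
    have "refl n y \<circ> refl n x = refl n x \<circ> refl n y"
    proof (cases "x = y")
      case False
      then have "ip n y x = 0" using assms(1) xy unfolding orthogonal_set_def by auto
      then show ?thesis using refl_orthogonal_commute by (auto simp: fun_eq_iff)
    qed simp
    then show "(\<lambda>f. refl n y \<circ> f) \<circ> (\<lambda>f. refl n x \<circ> f) = (\<lambda>f. refl n x \<circ> f) \<circ> (\<lambda>f. refl n y \<circ> f)"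
      by (simp add: fun_eq_iff comp_assoc)
  qed
  show ?thesis unfolding refl_prod_def by (rule fold_insert[OF assms(2-4)])
qed

definition sperm :: "nat \<Rightarrow> (nat \<Rightarrow> nat) \<Rightarrow> (nat \<Rightarrow> real) \<Rightarrow> vec \<Rightarrow> vec" where
  "sperm n q e v = (\<lambda>k. if 1 \<le> k \<and> k \<le> n then e k * v (q k) else v k)"

definition signed_perm :: "nat \<Rightarrow> (nat \<Rightarrow> nat) \<Rightarrow> (nat \<Rightarrow> real) \<Rightarrow> bool" where
  "signed_perm n q e \<longleftrightarrow> bij_betw q {1..n} {1..n} \<and> (\<forall>k. e k = 1 \<or> e k = -1)"

lemma sperm_linear:
  "sperm n q e (u - w) = sperm n q e u - sperm n q e w"
  "sperm n q e (u + w) = sperm n q e u + sperm n q e w"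
  "sperm n q e (2 * u) = 2 * sperm n q e u"
  by (auto simp: sperm_def fun_eq_iff algebra_simps)

lemma signed_perm_comp:
  assumes "signed_perm n q1 e1" "signed_perm n q2 e2"
  shows "sperm n q1 e1 \<circ> sperm n q2 e2 = sperm n (q2 \<circ> q1) (\<lambda>k. e1 k * e2 (q1 k))"
    and "signed_perm n (q2 \<circ> q1) (\<lambda>k. e1 k * e2 (q1 k))"
proof -
  have b1: "bij_betw q1 {1..n} {1..n}" and b2: "bij_betw q2 {1..n} {1..n}"
    using assms signed_perm_def by auto
  then have "1 \<le> q1 k \<and> q1 k \<le> n" if "1 \<le> k" "k \<le> n" for k
    using that bij_betw_apply by fastforce
  then show "sperm n q1 e1 \<circ> sperm n q2 e2 = sperm n (q2 \<circ> q1) (\<lambda>k. e1 k * e2 (q1 k))"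
    by (auto simp: sperm_def fun_eq_iff)
  have "e1 k * e2 (q1 k) = 1 \<or> e1 k * e2 (q1 k) = -1" for k
    using assms unfolding signed_perm_def by (metis mult_1 mult_minus1 minus_minus)
  with bij_betw_trans[OF b1 b2] show "signed_perm n (q2 \<circ> q1) (\<lambda>k. e1 k * e2 (q1 k))"
    unfolding signed_perm_def by blast
qed

lemma refl_Minus:
  assumes "1 \<le> a" "a < b" "b \<le> n"
  shows "refl n (eps a - eps b) = sperm n (transpose a b) (\<lambda>_. 1)"
  using assms by (auto simp: refl_def sperm_def fun_eq_iff ip_diff ip_eps transpose_def eps_apply)
    (simp_all add: field_simps)

lemma refl_pos_root:
  assumes "l \<in> pos_labels t n"
  obtains q e where "refl n (rvec l) = sperm n q e" "signed_perm n q e"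
    "\<And>k. rvec l k = 0 \<Longrightarrow> q k = k \<and> e k = 1"
  using assms
proof (cases rule: pos_labels_cases)
  case (M a b)
  then show ?thesis
    by (intro that[of "transpose a b" "\<lambda>_. 1"])
       (auto simp: refl_Minus signed_perm_def eps_apply transpose_def split: if_splits)
next
  case (P a b)
  have "refl n (rvec l) = sperm n (transpose a b) (\<lambda>k. if k = a \<or> k = b then -1 else 1)"
    using P by (auto simp: refl_def sperm_def fun_eq_iff ip_add ip_eps eps_apply transpose_def)
      (simp_all add: field_simps)
  with P show ?thesis
    by (intro that[of "transpose a b" "\<lambda>k. if k = a \<or> k = b then -1 else 1"])
       (auto simp: signed_perm_def eps_apply transpose_def split: if_splits)
next
  case (S a)
  then show ?thesis
    by (intro that[of id "\<lambda>k. if k = a then -1 else 1"])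
       (auto simp: refl_def sperm_def fun_eq_iff ip_eps signed_perm_def eps_apply)
next
  case (L a)
  then show ?thesis
    by (intro that[of id "\<lambda>k. if k = a then -1 else 1"])
       (auto simp: refl_def sperm_def fun_eq_iff ip_two ip_eps signed_perm_def eps_apply)
qed

lemma refl_prod_signed_perm:
  assumes "orthogonal_set n D" "D \<subseteq> pos_roots t n" "finite F" "F \<subseteq> D"
  obtains q e where "refl_prod n F = sperm n q e" "signed_perm n q e"
    "\<And>k. \<forall>\<gamma>\<in>F. \<gamma> k = 0 \<Longrightarrow> q k = k \<and> e k = 1"
proof -
  have "\<exists>q e. refl_prod n F = sperm n q e \<and> signed_perm n q e \<and>
              (\<forall>k. (\<forall>\<gamma>\<in>F. \<gamma> k = 0) \<longrightarrow> q k = k \<and> e k = 1)"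
    using assms(3,4)
  proof (induction F rule: finite_induct)
    case empty
    have "refl_prod n {} = sperm n (\<lambda>k. k) (\<lambda>_. 1)"
      by (simp add: refl_prod_def sperm_def fun_eq_iff)
    moreover have "signed_perm n (\<lambda>k. k) (\<lambda>_. 1)"
      using bij_betw_id by (simp add: signed_perm_def id_def)
    ultimately show ?case by blast
  next
    case (insert x F)
    then obtain q e where qe: "refl_prod n F = sperm n q e" "signed_perm n q e"
        "\<forall>k. (\<forall>\<gamma>\<in>F. \<gamma> k = 0) \<longrightarrow> q k = k \<and> e k = 1"
      by auto
    obtain l where "l \<in> pos_labels t n" "x = rvec l"
      using insert(4) assms(2) unfolding pos_roots_def by auto
    then obtain q1 e1 where q1: "refl n x = sperm n q1 e1" "signed_perm n q1 e1"
        "\<And>k. x k = 0 \<Longrightarrow> q1 k = k \<and> e1 k = 1"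
      by (metis refl_pos_root)
    have "refl_prod n (insert x F) = refl n x \<circ> refl_prod n F"
      by (rule refl_prod_insert[OF assms(1) insert(4,1,2)])
    also have "\<dots> = sperm n (q \<circ> q1) (\<lambda>k. e1 k * e (q1 k))"
      unfolding q1(1) qe(1) by (rule signed_perm_comp(1)[OF q1(2) qe(2)])
    finally show ?case
      using signed_perm_comp(2)[OF q1(2) qe(2)] q1(3) qe(3)
      by (intro exI[of _ "q \<circ> q1"] exI[of _ "\<lambda>k. e1 k * e (q1 k)"]) (auto simp: comp_def)
  qed
  then show ?thesis using that by blast
qed

lemma signed_eps_pair_root:
  assumes "x \<in> {1..n}" "y \<in> {1..n}" "x \<noteq> y" "s = 1 \<or> s = -1" "s' = 1 \<or> s' = -1"
  shows "(\<lambda>i. s * eps x i + s' * eps y i) \<in> all_roots t n"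
proof -
  have ordered: "(\<lambda>i. s * eps x i + s' * eps y i) \<in> all_roots t n"
    if "1 \<le> x" "x < y" "y \<le> n" "s = 1 \<or> s = -1" "s' = 1 \<or> s' = -1" for x y s s'
  proof -
    have m: "eps x - eps y \<in> pos_roots t n" and p: "eps x + eps y \<in> pos_roots t n"
      using that Minus_in Plus_in by auto
    have "(\<lambda>i. s * eps x i + s' * eps y i) \<in> {eps x - eps y, eps x + eps y, -(eps x - eps y), -(eps x + eps y)}"
      using that(4,5) by (auto simp: fun_eq_iff)
    then show ?thesis using m p unfolding all_roots_def by (elim insertE emptyE; metis Un_iff imageI)
  qed
  show ?thesis
    using assms ordered[of x y s s'] ordered[of y x s' s] by (cases "x < y") (auto simp: add.commute)
qed

lemma sperm_eps:
  assumes "bij_betw q {1..n} {1..n}" "a \<in> {1..n}"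
  obtains k where "k \<in> {1..n}" "q k = a" "sperm n q e (eps a) = (\<lambda>i. e k * eps k i)"
proof -
  obtain k where k: "k \<in> {1..n}" "q k = a" using assms bij_betw_imp_surj_on by (metis imageE)
  have "(q i = a) = (i = k)" if "i \<in> {1..n}" for i
    using assms(1) k that unfolding bij_betw_def by (metis inj_on_eq_iff)
  then have "sperm n q e (eps a) = (\<lambda>i. e k * eps k i)"
    using k assms(2) by (auto simp: sperm_def eps_apply fun_eq_iff)
  with k show ?thesis using that by blast
qed

lemma sperm_eps_pair_root:
  assumes "signed_perm n q e" "1 \<le> a" "a < b" "b \<le> n"
  shows "sperm n q e (eps a - eps b) \<in> all_roots t n" and "sperm n q e (eps a + eps b) \<in> all_roots t n"
proof -
  have bij: "bij_betw q {1..n} {1..n}" and sg: "\<And>k. e k = 1 \<or> e k = -1"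
    using assms(1) signed_perm_def by auto
  have neg_sign: "- e k = 1 \<or> - e k = -1" for k using sg[of k] by auto
  obtain k where k: "k \<in> {1..n}" "q k = a" "sperm n q e (eps a) = (\<lambda>i. e k * eps k i)"
    using sperm_eps[OF bij, of a] assms by auto
  obtain k' where k': "k' \<in> {1..n}" "q k' = b" "sperm n q e (eps b) = (\<lambda>i. e k' * eps k' i)"
    using sperm_eps[OF bij, of b] assms by auto
  have kk': "k \<noteq> k'" using k(2) k'(2) assms(3) by auto
  have "sperm n q e (eps a - eps b) = (\<lambda>i. e k * eps k i + (- e k') * eps k' i)"
    unfolding sperm_linear k(3) k'(3) by (simp add: fun_eq_iff)
  then show "sperm n q e (eps a - eps b) \<in> all_roots t n"
    using signed_eps_pair_root[OF k(1) k'(1) kk' sg neg_sign] by simp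
  have "sperm n q e (eps a + eps b) = (\<lambda>i. e k * eps k i + e k' * eps k' i)"
    unfolding sperm_linear k(3) k'(3) by (simp add: fun_eq_iff)
  then show "sperm n q e (eps a + eps b) \<in> all_roots t n"
    using signed_eps_pair_root[OF k(1) k'(1) kk' sg sg] by simp
qed

lemma sperm_root:
  assumes "signed_perm n q e" "v \<in> pos_roots t n"
  shows "sperm n q e v \<in> all_roots t n"
proof -
  have bij: "bij_betw q {1..n} {1..n}" and sg: "\<And>k. e k = 1 \<or> e k = -1"
    using assms(1) signed_perm_def by auto
  obtain l where l: "l \<in> pos_labels t n" "v = rvec l" using assms(2) unfolding pos_roots_def by auto
  from l(1) show ?thesis
  proof (cases rule: pos_labels_cases)
    case (M a b)
    then show ?thesis using sperm_eps_pair_root(1)[OF assms(1)] l by simp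
  next
    case (P a b)
    then show ?thesis using sperm_eps_pair_root(2)[OF assms(1)] l by simp
  next
    case (S a)
    then obtain k where k: "k \<in> {1..n}" "sperm n q e v = (\<lambda>i. e k * eps k i)"
      using sperm_eps[OF bij, of a] l by auto
    have "eps k \<in> pos_roots t n" using Short_in k S by auto
    moreover have "sperm n q e v \<in> {eps k, - eps k}" using k sg[of k] by (auto simp: fun_eq_iff)
    ultimately show ?thesis unfolding all_roots_def by auto
  next
    case (L a)
    then obtain k where k: "k \<in> {1..n}" "sperm n q e (eps a) = (\<lambda>i. e k * eps k i)"
      using sperm_eps[OF bij, of a] by auto
    then have sv: "sperm n q e v = 2 * (\<lambda>i. e k * eps k i)" using l L by (simp add: sperm_linear)
    have "2 * eps k \<in> pos_roots t n" using Long_in k L by auto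
    moreover have "sperm n q e v \<in> {2 * eps k, - (2 * eps k)}"
      using sv sg[of k] by (auto simp: fun_eq_iff)
    ultimately show ?thesis unfolding all_roots_def by auto
  qed
qed

section \<open>The subsystem Phi~^+ and the set S(eps 1 - eps j)\<close>

lemma label_avoids_1_j:
  assumes "l \<in> pos_labels t n" "1 < j"
  shows "(rcol l \<noteq> 1 \<and> rcol l \<noteq> j \<and> rrow l \<noteq> int j \<and> rrow l \<noteq> - int j)
         \<longleftrightarrow> (rvec l 1 = 0 \<and> rvec l j = 0)"
  using assms(1) by (cases rule: pos_labels_cases) (use assms(2) in \<open>auto simp: eps_apply\<close>)

lemma tilde_roots_char:
  assumes "1 < j"
  shows "tilde_roots t n j = {\<alpha> \<in> pos_roots t n. \<alpha> 1 = 0 \<and> \<alpha> j = 0}"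
  unfolding tilde_roots_def col_set_def row_set_def pos_roots_def
  using label_avoids_1_j[OF _ assms] by fastforce

lemma eps_diff_split:
  assumes "eps 1 - eps j - (eps a - eps b) = eps c - eps d"
    and "1 \<le> a" "a < b" "1 \<le> c" "c < d" "1 < j"
  shows "(a = 1 \<and> b < j) \<or> (1 < a \<and> b = j)"
proof -
  have h: "\<And>k. eps 1 k - eps j k - (eps a k - eps b k) = eps c k - eps d k"
    using fun_cong[OF assms(1)] by simp
  show ?thesis using h[of 1] h[of j] h[of a] h[of b] h[of c] h[of d] assms(2-6)
    by (auto simp: eps_apply split: if_splits)
qed

text \<open>Since eps 1 - eps j has height 0, both summands of a decomposition into positive roots
  have height 0, i.e. are of the form eps a - eps b.\<close>

lemma S_set_char:
  assumes "1 < j" "j \<le> n"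
  shows "S_set t n (eps 1 - eps j) = (\<lambda>b. eps 1 - eps b) ` {2..<j} \<union> (\<lambda>a. eps a - eps j) ` {2..<j}"
    (is "_ = ?A \<union> ?B")
proof (intro equalityI subsetI)
  fix v assume "v \<in> S_set t n (eps 1 - eps j)"
  then have p1: "v \<in> pos_roots t n" and p2: "eps 1 - eps j - v \<in> pos_roots t n"
    unfolding S_set_def by auto
  have "(\<Sum>k\<in>{1..n}. (eps 1 - eps j) k) = 0"
    using assms by (simp add: sum_subtractf) (simp add: eps_apply)
  moreover have "(\<Sum>k\<in>{1..n}. (eps 1 - eps j - v) k) = (\<Sum>k\<in>{1..n}. (eps 1 - eps j) k) - (\<Sum>k\<in>{1..n}. v k)"
    by (simp add: sum_subtractf)
  ultimately have "(\<Sum>k\<in>{1..n}. v k) = 0" "(\<Sum>k\<in>{1..n}. (eps 1 - eps j - v) k) = 0"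
    using coord_sum_pos_root(1)[OF p1] coord_sum_pos_root(1)[OF p2] by linarith+
  then obtain a b c d where ab: "1 \<le> a" "a < b" "v = eps a - eps b"
      and cd: "1 \<le> c" "c < d" "eps 1 - eps j - v = eps c - eps d"
    using coord_sum_pos_root(2)[OF p1] coord_sum_pos_root(2)[OF p2] by metis
  then have "(a = 1 \<and> b < j) \<or> (1 < a \<and> b = j)"
    using eps_diff_split[OF _ ab(1,2) cd(1,2) assms(1)] by simp
  then show "v \<in> ?A \<union> ?B" using ab by auto
next
  fix v assume "v \<in> ?A \<union> ?B"
  then obtain b where "b \<in> {2..<j}" "v = eps 1 - eps b \<or> v = eps b - eps j" by auto
  moreover have "eps 1 - eps j - (eps 1 - eps b) = eps b - eps j"
    "eps 1 - eps j - (eps b - eps j) = eps 1 - eps b" by (simp_all add: algebra_simps)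
  ultimately show "v \<in> S_set t n (eps 1 - eps j)"
    using assms Minus_in[of 1 b n t] Minus_in[of b j n t] unfolding S_set_def by auto
qed

lemma card_S_set:
  assumes "1 < j" "j \<le> n"
  shows "card (S_set t n (eps 1 - eps j)) = 2 * (j - 2)"
proof -
  have "inj_on (\<lambda>b. eps 1 - eps b) {2..<j}" "inj_on (\<lambda>a. eps a - eps j) {2..<j}"
    by (auto intro!: inj_onI dest: eps_inj)
  moreover have "(\<lambda>b. eps 1 - eps b) ` {2..<j} \<inter> (\<lambda>a. eps a - eps j) ` {2..<j} = {}"
    using assms by (auto dest!: fun_cong[of _ _ 1] simp: eps_apply)
  ultimately show ?thesis
    unfolding S_set_char[OF assms] by (simp add: card_Un_disjoint card_image)
qed

section \<open>Inversions of r_\<beta> composed with a signed permutation fixing 1 and j\<close>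

definition touching_inversions :: "rtype \<Rightarrow> nat \<Rightarrow> nat \<Rightarrow> (vec \<Rightarrow> vec) \<Rightarrow> vec set" where
  "touching_inversions t n j \<sigma> =
     {\<alpha> \<in> pos_roots t n. (\<alpha> 1 \<noteq> 0 \<or> \<alpha> j \<noteq> 0) \<and> \<sigma> \<alpha> \<in> uminus ` pos_roots t n}"

context
  fixes t :: rtype and n j :: nat and q :: "nat \<Rightarrow> nat" and e :: "nat \<Rightarrow> real"
    and \<sigma> :: "vec \<Rightarrow> vec"
  assumes j_range: "1 < j" "j \<le> n"
    and perm: "signed_perm n q e"
    and fixes_1_j: "q 1 = 1" "q j = j" "e 1 = 1" "e j = 1"
    and sigma_eq: "\<sigma> = refl n (eps 1 - eps j) \<circ> sperm n q e"
begin

lemma sign_e: "e k = 1 \<or> e k = -1"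
  using perm signed_perm_def by auto

lemma q_inj: "i \<in> {1..n} \<Longrightarrow> k \<in> {1..n} \<Longrightarrow> q i = q k \<Longrightarrow> i = k"
  using perm unfolding signed_perm_def bij_betw_def by (blast dest: inj_onD)

lemma q_maps_rest:
  assumes "k \<in> {1..n}" "k \<noteq> 1" "k \<noteq> j"
  shows "q k \<in> {1..n}" "q k \<noteq> 1" "q k \<noteq> j"
proof -
  have "bij_betw q {1..n} {1..n}" using perm signed_perm_def by auto
  then show "q k \<in> {1..n}" by (rule bij_betw_apply) (rule assms(1))
  have 1: "1 \<in> {1..n}" and j: "j \<in> {1..n}" using j_range by auto
  show "q k \<noteq> 1"
  proof
    assume "q k = 1"
    then have "k = 1" using q_inj[OF assms(1) 1] fixes_1_j(1) by simp
    with assms(2) show False ..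
  qed
  show "q k \<noteq> j"
  proof
    assume "q k = j"
    then have "k = j" using q_inj[OF assms(1) j] fixes_1_j(2) by simp
    with assms(3) show False ..
  qed
qed

lemma sigma_coords:
  shows "\<sigma> v 1 = v j" and "\<sigma> v j = v 1"
    and "k \<in> {1..n} \<Longrightarrow> k \<noteq> 1 \<Longrightarrow> k \<noteq> j \<Longrightarrow> \<sigma> v k = e k * v (q k)"
  using j_range fixes_1_j
  by (auto simp: sigma_eq refl_Minus sperm_def transpose_def)

lemma sigma_root: "v \<in> pos_roots t n \<Longrightarrow> \<sigma> v \<in> all_roots t n"
proof -
  have r: "signed_perm n (transpose 1 j) (\<lambda>_. 1)"
    using j_range by (simp add: signed_perm_def)
  have "\<sigma> = sperm n (q \<circ> transpose 1 j) (\<lambda>k. 1 * e (transpose 1 j k))"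
    unfolding sigma_eq refl_Minus[OF le_refl j_range] by (rule signed_perm_comp(1)[OF r perm])
  moreover assume "v \<in> pos_roots t n"
  ultimately show ?thesis using sperm_root[OF signed_perm_comp(2)[OF r perm]] by simp
qed

lemma touching_inversions_subset:
  "touching_inversions t n j \<sigma> \<subseteq>
     (\<lambda>a. eps a - eps j) ` {1..<j} \<union> (\<lambda>k. (\<lambda>i. eps 1 i - e k * eps (q k) i)) ` {2..<j}"
proof
  fix v assume "v \<in> touching_inversions t n j \<sigma>"
  then have v: "v \<in> pos_roots t n" "v 1 \<noteq> 0 \<or> v j \<noteq> 0" "\<sigma> v \<in> uminus ` pos_roots t n"
    unfolding touching_inversions_def by auto
  obtain m where m: "1 \<le> m" "m \<le> n" "\<forall>k<m. \<sigma> v k = 0" "\<sigma> v m < 0"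
    using v(3) by (rule neg_root_leading)
  consider "v j < 0" | "v j > 0" | "v j = 0" by linarith
  then show "v \<in> (\<lambda>a. eps a - eps j) ` {1..<j} \<union> (\<lambda>k. (\<lambda>i. eps 1 i - e k * eps (q k) i)) ` {2..<j}"
  proof cases
    case 1
    then obtain a where "1 \<le> a" "a < j" "v = eps a - eps j" using pos_root_neg_coord[OF v(1)] by blast
    then show ?thesis by auto
  next
    case 2
    then show ?thesis using m sigma_coords(1)[of v] by (cases "m = 1") auto
  next
    case 3
    text \<open>Then v = eps 1 \<plusminus> eps b, and the first negative coordinate m of \<sigma> v satisfies
      1 < m < j and q m = b.\<close>
    have v1: "v 1 > 0" using v(2) 3 pos_root_first_coord(1)[OF v(1)] by auto
    have "m \<noteq> 1" "m \<noteq> j" "\<not> j < m"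
      using m(3,4) sigma_coords(1,2)[of v] 3 v1 by auto
    then have mm: "1 < m" "m < j" "m \<in> {1..n}" using m(1) j_range by auto
    have neg: "e m * v (q m) < 0" using sigma_coords(3)[OF mm(3)] mm m(4) by auto
    have "v 1 \<noteq> 0" "v (q m) \<noteq> 0" "q m \<noteq> 1" using v1 neg q_maps_rest[OF mm(3)] mm by auto
    note v_eq = pos_root_in_col1[OF v(1) this]
    have vqm: "v (q m) = - e m" using v_eq(2) sign_e[of m] neg by auto
    have "v = (\<lambda>i. eps 1 i - e m * eps (q m) i)" using v_eq(1) unfolding vqm by simp
    then show ?thesis using mm by auto
  qed
qed

lemma touching_inversions_Minus:
  assumes "1 \<le> a" "a < j"
  shows "eps a - eps j \<in> touching_inversions t n j \<sigma>"
proof -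
  have vp: "eps a - eps j \<in> pos_roots t n" using Minus_in assms j_range by simp
  have "\<sigma> (eps a - eps j) \<in> uminus ` pos_roots t n"
    by (rule neg_root_if_leading_negative[OF sigma_root[OF vp], of 1])
       (use sigma_coords(1) assms in \<open>auto simp: eps_apply\<close>)
  then show ?thesis unfolding touching_inversions_def using vp assms by (simp add: eps_apply)
qed

lemma touching_inversions_col1:
  assumes "2 \<le> k" "k < j"
  shows "(\<lambda>i. eps 1 i - e k * eps (q k) i) \<in> touching_inversions t n j \<sigma>"
proof -
  define v where "v = (\<lambda>i. eps 1 i - e k * eps (q k) i)"
  have kR: "k \<in> {1..n}" and k: "k \<noteq> 1" "k \<noteq> j" using assms j_range by auto
  note qk = q_maps_rest[OF kR k]
  have "v \<in> {eps 1 - eps (q k), eps 1 + eps (q k)}"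
    using sign_e[of k] by (auto simp: v_def fun_eq_iff)
  then have vp: "v \<in> pos_roots t n"
    using Minus_in[of 1 "q k" n t] Plus_in[of 1 "q k" n t] qk assms by auto
  have "\<sigma> v i = 0" if "1 \<le> i" "i < k" for i
  proof (cases "i = 1")
    case False
    have iR: "i \<in> {1..n}" using that assms j_range by auto
    have "q i \<noteq> q k"
      using q_inj[OF iR kR] that by auto
    then show ?thesis
      using sigma_coords(3)[OF iR False] q_maps_rest[OF iR False] that assms by (simp add: v_def eps_apply)
  qed (use sigma_coords(1) qk assms in \<open>simp add: v_def eps_apply\<close>)
  moreover have "\<sigma> v k < 0"
    using sigma_coords(3)[OF kR] sign_e[of k] qk assms by (auto simp: v_def eps_apply)
  ultimately have "\<sigma> v \<in> uminus ` pos_roots t n"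
    using neg_root_if_leading_negative[OF sigma_root[OF vp], of k] assms by auto
  then show ?thesis
    using vp qk unfolding touching_inversions_def v_def by (simp add: eps_apply)
qed

text \<open>The two families are injectively parametrised and disjoint (they differ at coordinate j),
  so there are (j - 1) + (j - 2) touching inversions.\<close>

lemma card_touching_inversions: "card (touching_inversions t n j \<sigma>) = 2 * j - 3"
proof -
  let ?A = "(\<lambda>a. eps a - eps j) ` {1..<j}"
  let ?B = "(\<lambda>k. (\<lambda>i. eps 1 i - e k * eps (q k) i)) ` {2..<j}"
  have eq: "touching_inversions t n j \<sigma> = ?A \<union> ?B"
    using touching_inversions_subset touching_inversions_Minus touching_inversions_col1 by fastforce
  have inj_A: "inj_on (\<lambda>a. eps a - eps j) {1..<j}" by (auto intro!: inj_onI dest: eps_inj)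
  have inj_B: "inj_on (\<lambda>k. (\<lambda>i. eps 1 i - e k * eps (q k) i)) {2..<j}"
  proof (rule inj_onI)
    fix a b assume ab: "a \<in> {2..<j}" "b \<in> {2..<j}"
      and eq: "(\<lambda>i. eps 1 i - e a * eps (q a) i) = (\<lambda>i. eps 1 i - e b * eps (q b) i)"
    have aR: "a \<in> {1..n}" and bR: "b \<in> {1..n}" using ab j_range by auto
    have "e a = e b * eps (q b) (q a)"
      using fun_cong[OF eq, of "q a"] q_maps_rest[OF aR] ab by (simp add: eps_apply)
    then have "q a = q b" using sign_e[of a] by (auto simp: eps_apply split: if_splits)
    then show "a = b" using q_inj[OF aR bR] by simp
  qed
  have "?A \<inter> ?B = {}"
  proof -
    have "(eps a - eps j) j \<noteq> eps 1 j - e k * eps (q k) j" if "a \<in> {1..<j}" "k \<in> {2..<j}" for a k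
      using q_maps_rest[of k] that j_range by (simp add: eps_apply)
    then show ?thesis by (fastforce dest: fun_cong)
  qed
  then have "card (?A \<union> ?B) = (j - 1) + (j - 2)"
    using card_image[OF inj_A] card_image[OF inj_B] by (simp add: card_Un_disjoint)
  then show ?thesis using eq j_range by simp
qed

lemma sperm_fixes_1_j: "sperm n q e v 1 = v 1" "sperm n q e v j = v j"
  using fixes_1_j j_range by (auto simp: sperm_def)

lemma sigma_on_tilde: "v 1 = 0 \<Longrightarrow> v j = 0 \<Longrightarrow> \<sigma> v = sperm n q e v"
  using sperm_fixes_1_j[of v] j_range
  by (auto simp: sigma_eq refl_Minus sperm_def transpose_def fun_eq_iff)

lemma inversions_split:
  "{\<alpha> \<in> pos_roots t n. \<sigma> \<alpha> \<in> uminus ` pos_roots t n}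
     = {\<alpha> \<in> tilde_roots t n j. sperm n q e \<alpha> \<notin> tilde_roots t n j} \<union> touching_inversions t n j \<sigma>"
  (is "?Inv = ?A \<union> _")
proof (intro equalityI subsetI)
  note T_eq = tilde_roots_char[OF j_range(1), of t n]
  fix v assume "v \<in> ?Inv"
  then have v: "v \<in> pos_roots t n" "\<sigma> v \<in> uminus ` pos_roots t n" by auto
  show "v \<in> ?A \<union> touching_inversions t n j \<sigma>"
  proof (cases "v 1 = 0 \<and> v j = 0")
    case True
    then have "sperm n q e v \<notin> pos_roots t n" using v sigma_on_tilde pos_root_not_neg by metis
    then show ?thesis using v True unfolding T_eq by auto
  qed (use v in \<open>auto simp: touching_inversions_def\<close>)
next
  note T_eq = tilde_roots_char[OF j_range(1), of t n]
  fix v assume v: "v \<in> ?A \<union> touching_inversions t n j \<sigma>"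
  show "v \<in> ?Inv"
  proof (cases "v \<in> ?A")
    case True
    then have vp: "v \<in> pos_roots t n" and v0: "v 1 = 0" "v j = 0"
      and "sperm n q e v \<notin> pos_roots t n"
      using sperm_fixes_1_j[of v] unfolding T_eq by auto
    then have "sperm n q e v \<in> uminus ` pos_roots t n"
      using sperm_root[OF perm vp] unfolding all_roots_def by auto
    then show ?thesis using vp sigma_on_tilde[OF v0] by simp
  qed (use v in \<open>auto simp: touching_inversions_def\<close>)
qed

lemma wlen_split:
  "wlen t n \<sigma> = card {\<alpha> \<in> tilde_roots t n j. sperm n q e \<alpha> \<notin> tilde_roots t n j} + (2 * j - 3)"
proof -
  note T_eq = tilde_roots_char[OF j_range(1), of t n]
  let ?A = "{\<alpha> \<in> tilde_roots t n j. sperm n q e \<alpha> \<notin> tilde_roots t n j}"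
  have "?A \<inter> touching_inversions t n j \<sigma> = {}"
    unfolding T_eq touching_inversions_def by auto
  moreover have "finite ?A" "finite (touching_inversions t n j \<sigma>)"
    unfolding T_eq touching_inversions_def using finite_pos_roots by auto
  ultimately show ?thesis
    unfolding wlen_def inversions_split using card_touching_inversions by (simp add: card_Un_disjoint)
qed

end

lemma orthogonal_split_off:
  assumes "D \<subseteq> pos_roots t n" "orthogonal_set n D" "1 < j" "j \<le> n"
    and "D \<inter> col_set t n 1 = {eps 1 - eps j}"
  shows "D = insert (eps 1 - eps j) (D \<inter> tilde_roots t n j)"
    and "eps 1 - eps j \<notin> tilde_roots t n j"
proof -
  let ?\<beta> = "eps 1 - eps j"
  have \<beta>D: "?\<beta> \<in> D" using assms(5) by auto
  have "d \<in> tilde_roots t n j" if "d \<in> D" "d \<noteq> ?\<beta>" for d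
  proof -
    have dp: "d \<in> pos_roots t n" using that assms(1) by auto
    have d1: "d 1 = 0"
      using pos_root_first_coord(2)[OF dp] that assms(5) by blast
    have "ip n d ?\<beta> = 0" using assms(2) that \<beta>D unfolding orthogonal_set_def by auto
    moreover have "ip n d ?\<beta> = d 1 - d j" using assms(3,4) by (simp add: ip_diff ip_eps)
    ultimately show ?thesis using d1 dp tilde_roots_char[OF assms(3)] by auto
  qed
  then show "D = insert ?\<beta> (D \<inter> tilde_roots t n j)" using \<beta>D by auto
  show "?\<beta> \<notin> tilde_roots t n j" using tilde_roots_char[OF assms(3)] assms(3) by (simp add: eps_apply)
qed

theorem lemma3p2:
  fixes t :: rtype and n j :: nat and D :: "vec set"
  assumes "D \<subseteq> pos_roots t n"
    and "orthogonal_set n D"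
    and "1 < j" and "j \<le> n"
    and "D \<inter> col_set t n 1 = {eps 1 - eps j}"
  shows "wlen t n (refl_prod n D)
       = card {\<alpha> \<in> tilde_roots t n j.
                 refl_prod n (D \<inter> tilde_roots t n j) \<alpha> \<notin> tilde_roots t n j}
         + card (S_set t n (eps 1 - eps j)) + 1"
proof -
  let ?T = "tilde_roots t n j"
  note split = orthogonal_split_off[OF assms]
  have fin: "finite (D \<inter> ?T)"
    using assms(1) finite_pos_roots finite_subset by blast
  obtain q e where qe: "refl_prod n (D \<inter> ?T) = sperm n q e" "signed_perm n q e"
      "\<And>k. \<forall>\<gamma>\<in>D \<inter> ?T. \<gamma> k = 0 \<Longrightarrow> q k = k \<and> e k = 1"
    using refl_prod_signed_perm[OF assms(2,1) fin] by blast
  have fix_1_j: "q 1 = 1" "q j = j" "e 1 = 1" "e j = 1"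
    using qe(3) tilde_roots_char[OF assms(3)] by auto
  have "eps 1 - eps j \<notin> D \<inter> ?T" using split(2) by simp
  then have "refl_prod n (insert (eps 1 - eps j) (D \<inter> ?T)) = refl n (eps 1 - eps j) \<circ> sperm n q e"
    using refl_prod_insert[OF assms(2) equalityD2[OF split(1)] fin] qe(1) by simp
  then have "refl_prod n D = refl n (eps 1 - eps j) \<circ> sperm n q e"
    using split(1) by simp
  then have "wlen t n (refl_prod n D) = card {\<alpha> \<in> ?T. refl_prod n (D \<inter> ?T) \<alpha> \<notin> ?T} + (2 * j - 3)"
    using wlen_split[OF assms(3,4) qe(2) fix_1_j] qe(1) by simp
  then show ?thesis using card_S_set[OF assms(3,4)] assms(3) by simp
qed

end
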